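(* Let $c>0$ and let $f$ be a critical point of the free energy $F$ for one of the four kernels below, i.e. $f(P)=Z^{-1}\exp(-W(P))$ with $Z=\int e^{-W}d\nu$ and $W(P)=\int cG(P,P')f(P')\,d\nu(P')$, so that $$W(P)=c_1\,\bm p\cdot\bm m_1+(c_2Q_1+c_4Q_2):\bm m_1\bm m_1^T+(c_3Q_2+c_4Q_1):\bm m_2\bm m_2^T$$ (with the appropriate coefficients equal to zero). Let $R\in SO(3)$. Then: (a) For the $D_{\infty h}$ kernel $cG=c_2p_{11}^2$: $D_{\infty h}\subseteq R\mathcal J_fR^T$ if and only if $RQ_1R^T$ is diagonal with $(RQ_1R^T)_{22}=(RQ_1R^T)_{33}$. (b) For the $C_{\infty v}$ kernel $cG=c_1p_{11}+c_2p_{11}^2$: $C_{\infty v}\subseteq R\mathcal J_fR^T$ if and only if $RQ_1R^T$ is diagonal with $(RQ_1R^T)_{22}=(RQ_1R^T)_{33}$ and $(R\bm p)_2=(R\bm p)_3=0$. (c) For the $D_{2h}$ kernel $cG=c_2p_{11}^2+c_3p_{22}^2+c_4(p_{12}^2+p_{21}^2)$: $D_{2h}\subseteq R\mathcal J_fR^T$ if and only if both $RQ_1R^T$ and $RQ_2R^T$ are diagonal. (d) For the $C_{2v}$ kernel $cG=c_1p_{11}+c_2p_{11}^2+c_3p_{22}^2+c_4(p_{12}^2+p_{21}^2)$: $C_{2v}\subseteq R\mathcal J_fR^T$ if and only if $RQ_1R^T$ and $RQ_2R^T$ are diagonal and $(R\bm p)_2=(R\bm p)_3=0$.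
   Context: Orientations are $P\in SO(3)$ with body frame $\bm m_i(P)=P\bm e_i$ (columns of $P$); $\nu$ is the normalized Haar measure on $SO(3)$; $p_{ij}=\bm m_i(P)\cdot\bm m_j(P')$. The free energy of a probability density $f$ on $SO(3)$ is $F[f]=\int f\log f\,d\nu+\frac12\iint f(P)cG(P,P')f(P')\,d\nu\,d\nu$. Moments: $\bm p=\langle\bm m_1\rangle$, $Q_1=\langle\bm m_1\bm m_1^T\rangle$, $Q_2=\langle\bm m_2\bm m_2^T\rangle$ with $\langle u\rangle=\int uf\,d\nu$; $A:B=\mathrm{tr}(A^TB)$. Point groups (rotation axis along the first coordinate): with $R_1=\mathrm{diag}(1,-1,-1)$, $R_2=\mathrm{diag}(-1,1,-1)$, $R_3=\mathrm{diag}(-1,-1,1)$, $J_3=\mathrm{diag}(1,1,-1)$, $D_{\infty h}=D_\infty\cup D_\infty J_3$ where $D_\infty=\left\{\begin{pmatrix}\pm1&0&0\\0&\pm\cos\theta&-\sin\theta\\0&\pm\sin\theta&\cos\theta\end{pmatrix}\right\}$ (signs taken together, $\theta\in\mathbb R$); $C_{\infty v}=C_\infty\cup C_\infty J_3$ where $C_\infty=\left\{\begin{pmatrix}1&0&0\\0&\cos\theta&-\sin\theta\\0&\sin\theta&\cos\theta\end{pmatrix}\right\}$; $D_{2h}=\{I,R_1,R_2,R_3\}\cup\{J_3,J_3R_1,J_3R_2,J_3R_3\}$; $C_{2v}=\{I,R_1\}\cup\{J_3,J_3R_1\}$. For each kernel, the molecular symmetry group $\mathcal H$ is the group with the same name ($D_{\infty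 h}$, $C_{\infty v}$, $D_{2h}$, $C_{2v}$ respectively), and $\mathcal H^-$ denotes its elements of determinant $-1$. The phase symmetry group $\mathcal J_f$ is the set of $T\in O(3)$ such that: if $\det T=1$ then $f(TP)=f(P)$ for all $P\in SO(3)$; if $\det T=-1$ then $f(TPJ)=f(P)$ for all $P\in SO(3)$ and all $J\in\mathcal H^-$. *)

theory Defs
  imports "HOL-Probability.Probability"
begin

type_synonym mat3 = "real^3^3"

definition SO3 :: "mat3 set" where
  "SO3 = {P. rotation_matrix P}"

definition mat3 :: "real \<Rightarrow> real \<Rightarrow> real \<Rightarrow> real \<Rightarrow> real \<Rightarrow> real \<Rightarrow> real \<Rightarrow> real \<Rightarrow> real \<Rightarrow> mat3" where
  "mat3 a11 a12 a13 a21 a22 a23 a31 a32 a33 =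
     vector [vector [a11, a12, a13], vector [a21, a22, a23], vector [a31, a32, a33]]"

definition diag3 :: "real \<Rightarrow> real \<Rightarrow> real \<Rightarrow> mat3" where
  "diag3 a b c = mat3 a 0 0 0 b 0 0 0 c"

definition R1 :: mat3 where "R1 = diag3 1 (-1) (-1)"
definition R2 :: mat3 where "R2 = diag3 (-1) 1 (-1)"
definition R3 :: mat3 where "R3 = diag3 (-1) (-1) 1"
definition J3 :: mat3 where "J3 = diag3 1 1 (-1)"

definition D_inf :: "mat3 set" where
  "D_inf = {mat3 s 0 0 0 (s * cos \<theta>) (- sin \<theta>) 0 (s * sin \<theta>) (cos \<theta>) | s \<theta>. s = 1 \<or> s = -1}"
definition D_inf_h :: "mat3 set" where
  "D_inf_h = D_inf \<union> (\<lambda>A. A ** J3) ` D_inf"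

definition C_inf :: "mat3 set" where
  "C_inf = {mat3 1 0 0 0 (cos \<theta>) (- sin \<theta>) 0 (sin \<theta>) (cos \<theta>) | \<theta>. True}"
definition C_inf_v :: "mat3 set" where
  "C_inf_v = C_inf \<union> (\<lambda>A. A ** J3) ` C_inf"

definition D_2h :: "mat3 set" where
  "D_2h = {mat 1, R1, R2, R3} \<union> {J3, J3 ** R1, J3 ** R2, J3 ** R3}"
definition C_2v :: "mat3 set" where
  "C_2v = {mat 1, R1} \<union> {J3, J3 ** R1}"

definition m1 :: "mat3 \<Rightarrow> real^3" where "m1 P = column 1 P"
definition m2 :: "mat3 \<Rightarrow> real^3" where "m2 P = column 2 P"

definition kern :: "real \<Rightarrow> real \<Rightarrow> real \<Rightarrow> real \<Rightarrow> mat3 \<Rightarrow> mat3 \<Rightarrow> real" where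
  "kern c1 c2 c3 c4 P P' =
     c1 * (m1 P \<bullet> m1 P') + c2 * (m1 P \<bullet> m1 P')^2 + c3 * (m2 P \<bullet> m2 P')^2
     + c4 * ((m1 P \<bullet> m2 P')^2 + (m2 P \<bullet> m1 P')^2)"

(* normalized Haar measure on SO(3), characterised as the (unique) probability
   measure on the Borel sets of 3x3 matrices, concentrated on SO(3), invariant
   under left and right multiplication by rotations *)
definition haar_SO3 :: "mat3 measure \<Rightarrow> bool" where
  "haar_SO3 \<nu> \<longleftrightarrow> prob_space \<nu> \<and> sets \<nu> = sets borel \<and> emeasure \<nu> SO3 = 1 \<and>
     (\<forall>T. rotation_matrix T \<longrightarrow>
        distr \<nu> borel (\<lambda>P. T ** P) = \<nu> \<and> distr \<nu> borel (\<lambda>P. P ** T) = \<nu>)"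

definition crit_point :: "mat3 measure \<Rightarrow> (mat3 \<Rightarrow> mat3 \<Rightarrow> real) \<Rightarrow> (mat3 \<Rightarrow> real) \<Rightarrow> bool" where
  "crit_point \<nu> cG f \<longleftrightarrow>
     integrable \<nu> f \<and> (\<forall>P\<in>SO3. 0 \<le> f P) \<and> (\<integral>P. f P \<partial>\<nu>) = 1 \<and>
     (let W = (\<lambda>P. \<integral>P'. cG P P' * f P' \<partial>\<nu>);
          Z = (\<integral>P. exp (- W P) \<partial>\<nu>)
      in \<forall>P\<in>SO3. f P = exp (- W P) / Z)"

definition outer :: "real^3 \<Rightarrow> real^3 \<Rightarrow> mat3" where
  "outer u v = (\<chi> i j. u $ i * v $ j)"

definition mom_p :: "mat3 measure \<Rightarrow> (mat3 \<Rightarrow> real) \<Rightarrow> real^3" where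
  "mom_p \<nu> f = (\<integral>P. f P *\<^sub>R m1 P \<partial>\<nu>)"
definition mom_Q1 :: "mat3 measure \<Rightarrow> (mat3 \<Rightarrow> real) \<Rightarrow> mat3" where
  "mom_Q1 \<nu> f = (\<integral>P. f P *\<^sub>R outer (m1 P) (m1 P) \<partial>\<nu>)"
definition mom_Q2 :: "mat3 measure \<Rightarrow> (mat3 \<Rightarrow> real) \<Rightarrow> mat3" where
  "mom_Q2 \<nu> f = (\<integral>P. f P *\<^sub>R outer (m2 P) (m2 P) \<partial>\<nu>)"

definition phase_group :: "mat3 set \<Rightarrow> (mat3 \<Rightarrow> real) \<Rightarrow> mat3 set" where
  "phase_group H f = {T. orthogonal_matrix T \<and>
     (det T = 1 \<longrightarrow> (\<forall>P\<in>SO3. f (T ** P) = f P)) \<and>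
     (det T = -1 \<longrightarrow> (\<forall>P\<in>SO3. \<forall>J\<in>{J\<in>H. det J = -1}. f (T ** P ** J) = f P))}"

definition conj_set :: "mat3 \<Rightarrow> mat3 set \<Rightarrow> mat3 set" where
  "conj_set R S = (\<lambda>T. R ** T ** transpose R) ` S"

definition is_diag :: "mat3 \<Rightarrow> bool" where
  "is_diag A \<longleftrightarrow> (\<forall>i j. i \<noteq> j \<longrightarrow> A $ i $ j = 0)"

end

theory Submission
  imports Defs
begin

text \<open>
  At a critical point, \<open>f = exp (- W) / Z\<close> and the potential \<open>W\<close> depends on \<open>f\<close> only through
  the moments \<open>p\<close>, \<open>Q\<^sub>1\<close>, \<open>Q\<^sub>2\<close>: it is a linear combination of \<open>p \<bullet> m\<^sub>1\<close> and of quadratic forms of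
  \<open>Q\<^sub>1\<close>, \<open>Q\<^sub>2\<close> evaluated at \<open>m\<^sub>1\<close>, \<open>m\<^sub>2\<close>. Hence \<open>f\<close> is invariant under \<open>P \<mapsto> T P J\<close> as soon as
  these moments are fixed by \<open>T\<close>, provided \<open>J\<close> maps \<open>e\<^sub>1\<close>, \<open>e\<^sub>2\<close> to \<open>\<plusminus>e\<^sub>1\<close>, \<open>\<plusminus>e\<^sub>2\<close>. Conversely,
  since the Haar measure is invariant under \<open>P \<mapsto> T P J\<close> whenever \<open>det T = det J\<close>, invariance
  of \<open>f\<close> forces \<open>p = \<plusminus>T p\<close> and \<open>Q\<^sub>i = T Q\<^sub>i T\<^sup>T\<close>. With \<open>T = R\<^sup>T D R\<close> this turns the inclusion
  of a point group in \<open>R J\<^sub>f R\<^sup>T\<close> into fixedness of \<open>R p\<close>, \<open>R Q\<^sub>i R\<^sup>T\<close> under the group. For the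
  necessity it is enough to use the half turns about two coordinate axes, the quarter turn
  about the first axis and the reflection \<open>J\<^sub>3\<close>.
\<close>

section \<open>Quadratic forms and orthogonal conjugation\<close>

lemma mat3_nth: "mat3 a11 a12 a13 a21 a22 a23 a31 a32 a33 $ i $ j =
  (if i = 1 then (if j = 1 then a11 else if j = 2 then a12 else a13)
   else if i = 2 then (if j = 1 then a21 else if j = 2 then a22 else a23)
   else (if j = 1 then a31 else if j = 2 then a32 else a33))"
  using exhaust_3[of i] exhaust_3[of j] by (auto simp: mat3_def)

lemmas mat3_entries = vec_eq_iff forall_3 sum_3 matrix_matrix_mult_def matrix_vector_mult_def
  transpose_def outer_def inner_vec_def column_def mat3_nth mat_def axis_def diag3_def R1_def R3_def J3_def

definition quad_form :: "mat3 \<Rightarrow> real^3 \<Rightarrow> real" where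
  "quad_form Q u = u \<bullet> (Q *v u)"

lemma quad_form_scaleR_outer: "quad_form (a *\<^sub>R outer w w) u = a * (u \<bullet> w)\<^sup>2"
  by (simp add: quad_form_def mat3_entries power2_eq_square algebra_simps)

lemma bounded_linear_quad_form: "bounded_linear (\<lambda>Q. quad_form Q u)"
  by (rule bounded_linearI') (simp_all add: quad_form_def mat3_entries algebra_simps)

lemma quad_form_scaleR: "quad_form Q (s *\<^sub>R u) = s\<^sup>2 * quad_form Q u"
  by (simp add: quad_form_def matrix_vector_mult_scaleR power2_eq_square)

lemma inner_orthogonal_matrix:
  "orthogonal_matrix T \<Longrightarrow> (T *v u) \<bullet> (T *v v) = u \<bullet> (v :: real^'n)"
  by (metis dot_matrix_product dot_matrix_vector_mul matrix_mul_lid orthogonal_matrix_def)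

lemma quad_form_conj_orthogonal:
  assumes "orthogonal_matrix T"
  shows "quad_form (T ** Q ** transpose T) (T *v u) = quad_form Q u"
proof -
  have "(T ** Q ** transpose T) *v (T *v u) = T *v (Q *v u)"
    using assms by (simp add: matrix_vector_mul_assoc orthogonal_matrix flip: matrix_mul_assoc)
  then show ?thesis
    using assms by (simp add: quad_form_def inner_orthogonal_matrix)
qed

lemma outer_matrix_vector_mult: "outer (A *v u) (B *v v) = A ** outer u v ** transpose B"
  by (simp add: mat3_entries algebra_simps)

lemma outer_scaleR: "outer (a *\<^sub>R u) (b *\<^sub>R v) = (a * b) *\<^sub>R outer u v"
  by (simp add: mat3_entries)

lemma norm_outer_le: "norm (outer u v) \<le> 3 * (norm u * norm v)"
proof -
  have "norm (outer u v) \<le> (\<Sum>i\<in>UNIV. norm (outer u v $ i))"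
    by (simp add: norm_vec_def L2_set_le_sum)
  also have "\<dots> \<le> (\<Sum>i\<in>(UNIV::3 set). norm u * norm v)"
  proof (rule sum_mono)
    fix i :: 3
    have "outer u v $ i = u $ i *\<^sub>R v" by (simp add: outer_def vec_eq_iff)
    then show "norm (outer u v $ i) \<le> norm u * norm v"
      using component_le_norm_cart[of u i] by (simp add: mult_right_mono)
  qed
  finally show ?thesis by simp
qed

lemma column_mult_eigenvector:
  fixes T P J :: "real^'n^'n"
  assumes "J *v axis k 1 = s *\<^sub>R axis k 1"
  shows "column k (T ** P ** J) = s *\<^sub>R (T *v column k P)"
  by (metis assms matrix_vector_mult_basis matrix_vector_mul_assoc matrix_vector_mult_scaleR)

lemma matrix_mul_uminus_left: "(- A) ** B = - (A ** B :: 'a::ring_1^'n^'m)"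
  by (simp add: matrix_matrix_mult_def vec_eq_iff sum_negf)

lemma matrix_mul_uminus_right: "A ** (- B) = - (A ** B :: 'a::ring_1^'n^'m)"
  by (simp add: matrix_matrix_mult_def vec_eq_iff sum_negf)

lemma transpose_uminus: "transpose (- A) = - transpose (A :: 'a::ring_1^'n^'m)"
  by (simp add: transpose_def vec_eq_iff)

lemma orthogonal_matrix_uminus: "orthogonal_matrix (- T) \<longleftrightarrow> orthogonal_matrix (T :: real^'n^'n)"
  by (simp add: orthogonal_matrix_def matrix_mul_uminus_left matrix_mul_uminus_right transpose_uminus)

lemma det_uminus_mat3: "det (- A) = - det (A :: mat3)"
  by (simp add: det_3 algebra_simps)

lemma orthogonal_matrix_conj:
  fixes R D :: "real^'n^'n"
  shows "orthogonal_matrix R \<Longrightarrow> orthogonal_matrix D \<Longrightarrow> orthogonal_matrix (transpose R ** D ** R)"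
  by (intro orthogonal_matrix_mul) simp_all

lemma det_conj_orthogonal:
  fixes R D :: "real^'n^'n"
  assumes "orthogonal_matrix R"
  shows "det (transpose R ** D ** R) = det D"
proof -
  have "det (transpose R) * det R = 1"
    using assms by (metis det_I det_mul orthogonal_matrix)
  then show ?thesis by (simp add: det_mul algebra_simps)
qed

lemma orthogonal_matrix_conj_cancel:
  fixes R X :: "real^'n^'n"
  assumes "orthogonal_matrix R"
  shows "transpose R ** (R ** X ** transpose R) ** R = X"
    and "R ** (transpose R ** X ** R) ** transpose R = X"
  using assms by (metis matrix_mul_assoc matrix_mul_lid matrix_mul_rid orthogonal_matrix_def)+

lemma conj_fixes_vector_iff:
  fixes R D :: "real^'n^'n"
  assumes "orthogonal_matrix R"
  shows "p = s *\<^sub>R ((transpose R ** D ** R) *v p) \<longleftrightarrow> R *v p = s *\<^sub>R (D *v (R *v p))"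
proof -
  have RRt: "R ** transpose R = mat 1" and RtR: "transpose R ** R = mat 1"
    using assms by (simp_all add: orthogonal_matrix_def)
  have "R *v (s *\<^sub>R ((transpose R ** D ** R) *v p)) = s *\<^sub>R (D *v (R *v p))"
    by (simp add: matrix_vector_mult_scaleR matrix_vector_mul_assoc matrix_mul_assoc RRt)
  moreover have "inj (\<lambda>x. R *v x)"
    by (metis RtR inj_on_inverseI matrix_vector_mul_assoc matrix_vector_mul_lid)
  ultimately show ?thesis by (metis injD)
qed

lemma conj_fixes_matrix_iff:
  fixes R D Q :: "real^'n^'n"
  assumes "orthogonal_matrix R"
  defines "T \<equiv> transpose R ** D ** R"
  shows "Q = T ** Q ** transpose T \<longleftrightarrow> R ** Q ** transpose R = D ** (R ** Q ** transpose R) ** transpose D"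
proof -
  have RRt: "R ** transpose R = mat 1"
    using assms by (simp add: orthogonal_matrix_def)
  have RRt': "X ** R ** transpose R = X" for X
    by (simp add: RRt flip: matrix_mul_assoc)
  have "R ** (T ** Q ** transpose T) ** transpose R = D ** (R ** Q ** transpose R) ** transpose D"
    by (simp add: T_def matrix_transpose_mul matrix_mul_assoc RRt RRt')
  moreover have "inj (\<lambda>X. R ** X ** transpose R)"
    by (rule inj_on_inverseI[where g="\<lambda>X. transpose R ** X ** R"])
      (rule orthogonal_matrix_conj_cancel(1)[OF assms(1)])
  ultimately show ?thesis by (metis injD)
qed

section \<open>The point groups\<close>

lemma is_diag_iff: "is_diag B \<longleftrightarrow> B$1$2 = 0 \<and> B$1$3 = 0 \<and> B$2$1 = 0 \<and> B$2$3 = 0 \<and> B$3$1 = 0 \<and> B$3$2 = 0"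
  unfolding is_diag_def by (auto simp: forall_3)

lemma diag3_conj_nth: "(diag3 a b c ** B ** transpose (diag3 a b c)) $ i $ j =
   (if i = 1 then a else if i = 2 then b else c) * (if j = 1 then a else if j = 2 then b else c) * B $ i $ j"
  using exhaust_3[of i] exhaust_3[of j] by (auto simp: mat3_entries)

lemma is_diag_of_conj_fixed:
  assumes "B = R1 ** B ** transpose R1" "B = R3 ** B ** transpose R3"
  shows "is_diag B"
proof -
  have "B $ i $ j = (R1 ** B ** transpose R1) $ i $ j \<and> B $ i $ j = (R3 ** B ** transpose R3) $ i $ j" for i j
    using assms by simp
  from this[of 1 2] this[of 1 3] this[of 2 1] this[of 2 3] this[of 3 1] this[of 3 2] show ?thesis
    unfolding is_diag_iff R1_def R3_def diag3_conj_nth by simp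
qed

lemma conj_J3_eq_conj_R3: "J3 ** B ** transpose J3 = R3 ** B ** transpose R3"
  by (simp add: mat3_entries)

lemma axis_of_fixed_by_R1: "v = R1 *v v \<Longrightarrow> v $ 2 = 0 \<and> v $ 3 = 0"
  by (auto simp: mat3_entries)

definition D_inf_elem :: "real \<Rightarrow> real \<Rightarrow> mat3" where
  "D_inf_elem s t = mat3 s 0 0 0 (s * cos t) (- sin t) 0 (s * sin t) (cos t)"

lemma D_inf_eq: "D_inf = {D_inf_elem s t | s t. s = 1 \<or> s = -1}"
  by (simp add: D_inf_def D_inf_elem_def)

lemma C_inf_eq: "C_inf = range (D_inf_elem 1)"
  by (auto simp: C_inf_def D_inf_elem_def)

lemma D_inf_h_cases:
  assumes "D \<in> D_inf_h"
  obtains s t where "s = 1 \<or> s = -1" "D = D_inf_elem s t \<or> D = D_inf_elem s t ** J3"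
  using assms unfolding D_inf_h_def D_inf_eq by auto

lemma C_inf_v_cases:
  assumes "D \<in> C_inf_v"
  obtains t where "D = D_inf_elem 1 t \<or> D = D_inf_elem 1 t ** J3"
  using assms unfolding C_inf_v_def C_inf_eq by auto

lemma C_inf_v_subset_D_inf_h: "C_inf_v \<subseteq> D_inf_h"
  unfolding C_inf_v_def D_inf_h_def C_inf_eq D_inf_eq by blast

lemma orthogonal_D_inf_elem: "s = 1 \<or> s = -1 \<Longrightarrow> orthogonal_matrix (D_inf_elem s t)"
  unfolding orthogonal_matrix
  by (auto simp: mat3_entries D_inf_elem_def algebra_simps simp flip: power2_eq_square)

lemma det_D_inf_elem: "s = 1 \<or> s = -1 \<Longrightarrow> det (D_inf_elem s t) = 1"
  by (auto simp: det_3 mat3_nth D_inf_elem_def algebra_simps simp flip: power2_eq_square)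

lemma orthogonal_J3: "orthogonal_matrix J3"
  unfolding orthogonal_matrix by (simp add: mat3_entries mat_def)

lemma orthogonal_D_inf_h: "\<forall>D\<in>D_inf_h. orthogonal_matrix D"
  by (metis D_inf_h_cases orthogonal_D_inf_elem orthogonal_J3 orthogonal_matrix_mul)

lemma D_inf_h_axis1: "\<forall>J\<in>D_inf_h. \<exists>s. s\<^sup>2 = 1 \<and> J *v axis 1 1 = s *\<^sub>R axis 1 1"
  by (auto elim!: D_inf_h_cases simp: mat3_entries D_inf_elem_def)

lemma C_inf_v_axis1: "\<forall>J\<in>C_inf_v. J *v axis 1 1 = axis 1 1"
  by (auto elim!: C_inf_v_cases simp: mat3_entries D_inf_elem_def)

lemma C_inf_v_fixes_axis_vector: "v $ 2 = 0 \<Longrightarrow> v $ 3 = 0 \<Longrightarrow> \<forall>D\<in>C_inf_v. D *v v = v"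
  by (auto elim!: C_inf_v_cases simp: mat3_entries D_inf_elem_def)

lemma D_inf_h_fixes_uniaxial:
  assumes "is_diag B" "B $ 2 $ 2 = B $ 3 $ 3"
  shows "\<forall>D\<in>D_inf_h. D ** B ** transpose D = B"
proof
  have cs: "cos t * (cos t * x) + sin t * (sin t * x) = x" for t x :: real
    by (metis mult.assoc distrib_right mult_1_left sin_cos_squared_add power2_eq_square add.commute)
  fix D assume "D \<in> D_inf_h"
  then show "D ** B ** transpose D = B"
    using assms
    by (auto elim!: D_inf_h_cases simp: is_diag_iff mat3_entries D_inf_elem_def algebra_simps cs)
qed

lemma R1_eq_D_inf_elem: "R1 = D_inf_elem 1 pi"
  by (simp add: R1_def diag3_def D_inf_elem_def)

lemma R3_eq_D_inf_elem: "R3 = D_inf_elem (-1) 0"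
  by (simp add: R3_def diag3_def D_inf_elem_def)

lemma D_inf_elem_in_C_inf_v: "D_inf_elem 1 t \<in> C_inf_v"
  by (simp add: C_inf_v_def C_inf_eq)

lemma D_inf_elem_in_D_inf_h: "s = 1 \<or> s = -1 \<Longrightarrow> D_inf_elem s t \<in> D_inf_h"
  by (auto simp: D_inf_h_def D_inf_eq)

lemma J3_in_C_inf_v: "J3 \<in> C_inf_v"
proof -
  have "J3 = D_inf_elem 1 0 ** J3"
    by (simp add: mat3_entries D_inf_elem_def)
  then show ?thesis
    unfolding C_inf_v_def C_inf_eq by blast
qed

lemma J3_axes: "J3 *v axis 1 1 = axis 1 1" "J3 *v axis 2 1 = axis 2 1"
  by (simp_all add: mat3_entries)

lemma eq_22_33_of_fixed_by_quarter_turn: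
  "B = D_inf_elem 1 (pi/2) ** B ** transpose (D_inf_elem 1 (pi/2)) \<Longrightarrow> B $ 2 $ 2 = B $ 3 $ 3"
  by (drule arg_cong[where f="\<lambda>A. A $ 2 $ 2"]) (simp add: mat3_entries D_inf_elem_def)

lemma D_2h_cases:
  assumes "D \<in> D_2h"
  obtains a b c where "D = diag3 a b c" "a\<^sup>2 = 1" "b\<^sup>2 = 1" "c\<^sup>2 = 1"
proof -
  have "mat 1 = diag3 1 1 1" "diag3 a b c ** diag3 a' b' c' = diag3 (a * a') (b * b') (c * c')"
    for a b c a' b' c'
    by (simp_all add: mat3_entries)
  then show ?thesis
    using assms that unfolding D_2h_def R1_def R2_def R3_def J3_def by force
qed

lemma C_2v_cases:
  assumes "D \<in> C_2v"
  obtains b c where "D = diag3 1 b c" "b\<^sup>2 = 1" "c\<^sup>2 = 1"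
proof -
  have "mat 1 = diag3 1 1 1" "diag3 a b c ** diag3 a' b' c' = diag3 (a * a') (b * b') (c * c')"
    for a b c a' b' c'
    by (simp_all add: mat3_entries)
  then show ?thesis
    using assms that unfolding C_2v_def R1_def J3_def by force
qed

lemma C_2v_subset_D_2h: "C_2v \<subseteq> D_2h"
  by (auto simp: C_2v_def D_2h_def)

lemma orthogonal_D_2h: "\<forall>D\<in>D_2h. orthogonal_matrix D"
  by (auto elim!: D_2h_cases simp: orthogonal_matrix mat3_entries power2_eq_square)

lemma D_2h_axes:
  "\<forall>J\<in>D_2h. \<exists>s. s\<^sup>2 = 1 \<and> J *v axis 1 1 = s *\<^sub>R axis 1 1"
  "\<forall>J\<in>D_2h. \<exists>s. s\<^sup>2 = 1 \<and> J *v axis 2 1 = s *\<^sub>R axis 2 1"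
  by (auto elim!: D_2h_cases simp: mat3_entries)

lemma D_2h_fixes_diagonal: "is_diag B \<Longrightarrow> \<forall>D\<in>D_2h. D ** B ** transpose D = B"
  by (auto elim!: D_2h_cases simp: is_diag_iff mat3_entries power2_eq_square)

lemma C_2v_axis1: "\<forall>J\<in>C_2v. J *v axis 1 1 = axis 1 1"
  by (auto elim!: C_2v_cases simp: mat3_entries)

lemma C_2v_fixes_axis_vector: "v $ 2 = 0 \<Longrightarrow> v $ 3 = 0 \<Longrightarrow> \<forall>D\<in>C_2v. D *v v = v"
  by (auto elim!: C_2v_cases simp: mat3_entries)

lemma det_R1_R3: "det R1 = 1" "det R3 = 1"
  by (simp_all add: det_3 mat3_entries)

section \<open>Mean-field potential and phase symmetry\<close>

definition mean_field :: "real \<Rightarrow> real \<Rightarrow> real \<Rightarrow> real \<Rightarrow> real^3 \<Rightarrow> mat3 \<Rightarrow> mat3 \<Rightarrow> mat3 \<Rightarrow> real" where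
  "mean_field c1 c2 c3 c4 p Q1 Q2 P =
     c1 * (m1 P \<bullet> p) + c2 * quad_form Q1 (m1 P) + c3 * quad_form Q2 (m2 P)
     + c4 * (quad_form Q2 (m1 P) + quad_form Q1 (m2 P))"

definition symmetric_under :: "(mat3 \<Rightarrow> real) \<Rightarrow> mat3 \<Rightarrow> mat3 \<Rightarrow> bool" where
  "symmetric_under f T J \<longleftrightarrow> (\<forall>P\<in>SO3. f (T ** P ** J) = f P)"

lemma norm_column_SO3: "P \<in> SO3 \<Longrightarrow> norm (column k P) = 1"
  by (simp add: SO3_def rotation_matrix_def orthogonal_matrix_orthonormal_columns)

lemma mult_mult_in_SO3:
  "orthogonal_matrix T \<Longrightarrow> orthogonal_matrix J \<Longrightarrow> det T = det J \<Longrightarrow> P \<in> SO3 \<Longrightarrow> T ** P ** J \<in> SO3"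
  by (auto simp: SO3_def rotation_matrix_def orthogonal_matrix_mul det_mul
      dest!: det_orthogonal_matrix)

lemma mean_field_eqI:
  assumes T: "orthogonal_matrix T" and s: "s\<^sup>2 = 1"
    and col1: "m1 P' = s *\<^sub>R (T *v m1 P)"
    and p: "c1 \<noteq> 0 \<Longrightarrow> p = s *\<^sub>R (T *v p)"
    and Q1: "c2 \<noteq> 0 \<or> c4 \<noteq> 0 \<Longrightarrow> Q1 = T ** Q1 ** transpose T"
    and Q2: "c3 \<noteq> 0 \<or> c4 \<noteq> 0 \<Longrightarrow> Q2 = T ** Q2 ** transpose T \<and> s'\<^sup>2 = 1 \<and> m2 P' = s' *\<^sub>R (T *v m2 P)"
  shows "mean_field c1 c2 c3 c4 p Q1 Q2 P' = mean_field c1 c2 c3 c4 p Q1 Q2 P"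
proof -
  have fixed_quad_form: "quad_form Q (t *\<^sub>R (T *v u)) = quad_form Q u"
    if "Q = T ** Q ** transpose T" "t\<^sup>2 = 1" for Q t u
    using quad_form_conj_orthogonal[OF T, of Q u] that by (simp add: quad_form_scaleR)
  have "c1 * (m1 P' \<bullet> p) = c1 * (m1 P \<bullet> p)"
  proof (cases "c1 = 0")
    case False
    have "m1 P' \<bullet> p = s\<^sup>2 * ((T *v m1 P) \<bullet> (T *v p))"
      using p[OF False] col1 by (metis inner_scaleR_left inner_scaleR_right mult.assoc power2_eq_square)
    then show ?thesis by (simp add: s inner_orthogonal_matrix[OF T])
  qed simp
  moreover have "c2 * quad_form Q1 (m1 P') = c2 * quad_form Q1 (m1 P)"
    using Q1 by (cases "c2 = 0") (simp_all add: col1 s fixed_quad_form)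
  moreover have "c3 * quad_form Q2 (m2 P') = c3 * quad_form Q2 (m2 P)"
    using Q2 by (cases "c3 = 0") (simp_all add: fixed_quad_form)
  moreover have "c4 * (quad_form Q2 (m1 P') + quad_form Q1 (m2 P'))
      = c4 * (quad_form Q2 (m1 P) + quad_form Q1 (m2 P))"
    using Q1 Q2 by (cases "c4 = 0") (simp_all add: col1 s fixed_quad_form)
  ultimately show ?thesis unfolding mean_field_def by linarith
qed

lemma subset_conj_set_iff:
  assumes "orthogonal_matrix R"
  shows "H \<subseteq> conj_set R S \<longleftrightarrow> (\<forall>D\<in>H. transpose R ** D ** R \<in> S)"
proof -
  have "D \<in> conj_set R S \<longleftrightarrow> transpose R ** D ** R \<in> S" for D
  proof
    assume "D \<in> conj_set R S"
    then obtain T where "T \<in> S" "D = R ** T ** transpose R"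
      by (auto simp: conj_set_def)
    then show "transpose R ** D ** R \<in> S"
      by (simp add: orthogonal_matrix_conj_cancel[OF assms])
  next
    assume "transpose R ** D ** R \<in> S"
    moreover have "D = R ** (transpose R ** D ** R) ** transpose R"
      by (simp add: orthogonal_matrix_conj_cancel[OF assms])
    ultimately show "D \<in> conj_set R S"
      unfolding conj_set_def by blast
  qed
  then show ?thesis by blast
qed

lemma subset_conj_phase_group_iff:
  assumes R: "R \<in> SO3" and H: "\<forall>D\<in>H. orthogonal_matrix D"
  shows "H \<subseteq> conj_set R (phase_group H f) \<longleftrightarrow>
    (\<forall>D\<in>H. (det D = 1 \<longrightarrow> symmetric_under f (transpose R ** D ** R) (mat 1)) \<and>
      (det D = -1 \<longrightarrow> (\<forall>J\<in>H. det J = -1 \<longrightarrow> symmetric_under f (transpose R ** D ** R) J)))"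
proof -
  have oR: "orthogonal_matrix R"
    using R by (simp add: SO3_def rotation_matrix_def)
  show ?thesis
    unfolding subset_conj_set_iff[OF oR]
    using H orthogonal_matrix_conj[OF oR] det_conj_orthogonal[OF oR]
    by (auto simp: phase_group_def symmetric_under_def)
qed

section \<open>Moments of a critical density\<close>

lemma continuous_on_column: "continuous_on UNIV (column k :: mat3 \<Rightarrow> real^3)"
  unfolding column_def by (intro continuous_intros)

lemma continuous_on_outer_column: "continuous_on UNIV (\<lambda>P :: mat3. outer (column k P) (column k P))"
  unfolding column_def outer_def by (intro continuous_intros)

locale critical_density =
  fixes \<nu> :: "mat3 measure" and f :: "mat3 \<Rightarrow> real" and c1 c2 c3 c4 :: real
  assumes haar: "haar_SO3 \<nu>" and crit: "crit_point \<nu> (kern c1 c2 c3 c4) f"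
begin

lemma sets_eq_borel: "sets \<nu> = sets borel"
  using haar by (simp add: haar_SO3_def)

lemma measurable_eq_borel: "measurable \<nu> N = measurable borel N"
  by (rule measurable_cong_sets[OF sets_eq_borel refl])

lemma AE_in_SO3: "AE P in \<nu>. P \<in> SO3"
proof -
  interpret prob_space \<nu> using haar by (simp add: haar_SO3_def)
  have "SO3 \<in> sets \<nu>"
    using haar emeasure_notin_sets[of SO3 \<nu>] by (auto simp: haar_SO3_def)
  then have "Measurable.pred \<nu> (\<lambda>P. P \<in> SO3)"
    by measurable
  moreover have "{P \<in> space \<nu>. P \<in> SO3} = SO3"
    using sets_eq_imp_space_eq[OF sets_eq_borel] by auto
  ultimately show ?thesis
    using haar by (simp add: AE_iff_emeasure_eq_1 haar_SO3_def)
qed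

lemma integrable_density: "integrable \<nu> f"
  using crit by (simp add: crit_point_def)

lemma borel_measurable_density: "f \<in> borel_measurable borel"
  using borel_measurable_integrable[OF integrable_density] by (simp add: measurable_eq_borel)

lemma integrable_density_scaleR:
  fixes g :: "mat3 \<Rightarrow> 'b::{banach, second_countable_topology}"
  assumes g: "continuous_on UNIV g" and bound: "\<And>P. P \<in> SO3 \<Longrightarrow> norm (g P) \<le> K"
  shows "integrable \<nu> (\<lambda>P. f P *\<^sub>R g P)"
proof (rule Bochner_Integration.integrable_bound[where f="\<lambda>P. \<bar>K\<bar> * f P"])
  show "integrable \<nu> (\<lambda>P. \<bar>K\<bar> * f P)"
    using integrable_density by simp
  show "(\<lambda>P. f P *\<^sub>R g P) \<in> borel_measurable \<nu>"
    using borel_measurable_continuous_onI[OF g] borel_measurable_density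
    by (simp add: measurable_eq_borel)
  show "AE P in \<nu>. norm (f P *\<^sub>R g P) \<le> norm (\<bar>K\<bar> * f P)"
    using AE_in_SO3
  proof eventually_elim
    case (elim P)
    have "norm (g P) \<le> \<bar>K\<bar>" using bound[OF elim] by linarith
    then show ?case by (simp add: abs_mult mult.commute[of "\<bar>K\<bar>"] mult_left_mono)
  qed
qed

lemma integrable_first_moment: "integrable \<nu> (\<lambda>P. f P *\<^sub>R column k P)"
  by (rule integrable_density_scaleR[OF continuous_on_column, where K=1])
    (simp add: norm_column_SO3)

lemma integrable_second_moment: "integrable \<nu> (\<lambda>P. f P *\<^sub>R outer (column k P) (column k P))"
proof (rule integrable_density_scaleR[OF continuous_on_outer_column, where K=3])
  show "norm (outer (column k P) (column k P)) \<le> 3" if "P \<in> SO3" for P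
    using norm_outer_le[of "column k P" "column k P"] that by (simp add: norm_column_SO3)
qed

lemma potential_eq_mean_field:
  "(\<integral>P'. kern c1 c2 c3 c4 P P' * f P' \<partial>\<nu>) =
     mean_field c1 c2 c3 c4 (mom_p \<nu> f) (mom_Q1 \<nu> f) (mom_Q2 \<nu> f) P"
proof -
  define g1 where "g1 = (\<lambda>P'. f P' *\<^sub>R m1 P')"
  define g2 where "g2 = (\<lambda>P'. f P' *\<^sub>R outer (m1 P') (m1 P'))"
  define g3 where "g3 = (\<lambda>P'. f P' *\<^sub>R outer (m2 P') (m2 P'))"
  have g_int: "integrable \<nu> g1" "integrable \<nu> g2" "integrable \<nu> g3"
    unfolding g1_def g2_def g3_def m1_def m2_def
    by (rule integrable_first_moment integrable_second_moment)+
  have inner_g1: "integrable \<nu> (\<lambda>P'. u \<bullet> g1 P')" "(\<integral>P'. u \<bullet> g1 P' \<partial>\<nu>) = u \<bullet> integral\<^sup>L \<nu> g1" for u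
    using integrable_bounded_linear[OF bounded_linear_inner_right g_int(1)]
      integral_bounded_linear[OF bounded_linear_inner_right g_int(1)]
    by simp_all
  have quad_h: "integrable \<nu> (\<lambda>P'. quad_form (h P') u)"
    "(\<integral>P'. quad_form (h P') u \<partial>\<nu>) = quad_form (integral\<^sup>L \<nu> h) u"
    if "integrable \<nu> h" for h u
    using integrable_bounded_linear[OF bounded_linear_quad_form that]
      integral_bounded_linear[OF bounded_linear_quad_form that]
    by simp_all
  have "(\<lambda>P'. kern c1 c2 c3 c4 P P' * f P') = (\<lambda>P'. mean_field c1 c2 c3 c4 (g1 P') (g2 P') (g3 P') P)"
    by (simp add: kern_def mean_field_def g1_def g2_def g3_def quad_form_scaleR_outer algebra_simps)
  moreover have "mom_p \<nu> f = integral\<^sup>L \<nu> g1" "mom_Q1 \<nu> f = integral\<^sup>L \<nu> g2" "mom_Q2 \<nu> f = integral\<^sup>L \<nu> g3"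
    by (simp_all add: mom_p_def mom_Q1_def mom_Q2_def g1_def g2_def g3_def)
  ultimately show ?thesis
    unfolding mean_field_def using g_int inner_g1 quad_h by simp
qed

lemma density_eq_of_mean_field_eq:
  assumes "P \<in> SO3" "P' \<in> SO3"
    and "mean_field c1 c2 c3 c4 (mom_p \<nu> f) (mom_Q1 \<nu> f) (mom_Q2 \<nu> f) P' =
      mean_field c1 c2 c3 c4 (mom_p \<nu> f) (mom_Q1 \<nu> f) (mom_Q2 \<nu> f) P"
  shows "f P' = f P"
  using crit assms unfolding crit_point_def Let_def potential_eq_mean_field by simp

lemma measurable_mult_mult: "(\<lambda>P. T ** P ** J) \<in> measurable \<nu> borel"
proof -
  have "continuous_on UNIV (\<lambda>P::mat3. T ** P ** J)"
    unfolding matrix_matrix_mult_def by (intro continuous_intros)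
  then show ?thesis
    using borel_measurable_continuous_onI by (simp add: measurable_eq_borel)
qed

lemma distr_rotation_mult:
  assumes "rotation_matrix T" "rotation_matrix J"
  shows "distr \<nu> borel (\<lambda>P. T ** P ** J) = \<nu>"
proof -
  have "distr \<nu> borel (\<lambda>P. T ** P ** J) = distr (distr \<nu> borel (\<lambda>P. T ** P)) borel (\<lambda>P. P ** J)"
    using distr_distr[of "\<lambda>P. P ** J" borel borel "\<lambda>P. T ** P" \<nu>]
      measurable_mult_mult[of "mat 1" J] measurable_mult_mult[of T "mat 1"]
    by (simp add: comp_def measurable_eq_borel)
  also have "\<dots> = \<nu>"
    using haar assms by (simp add: haar_SO3_def)
  finally show ?thesis .
qed

text \<open>\<open>haar_SO3\<close> only asserts invariance under rotations; a pair of improper \<open>T\<close>, \<open>J\<close> acts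
  like the pair of rotations \<open>-T\<close>, \<open>-J\<close>.\<close>

lemma distr_orthogonal_mult:
  assumes T: "orthogonal_matrix T" and J: "orthogonal_matrix J" and det: "det T = det J"
  shows "distr \<nu> borel (\<lambda>P. T ** P ** J) = \<nu>"
proof (cases "det T = 1")
  case True
  then show ?thesis using assms distr_rotation_mult by (simp add: rotation_matrix_def)
next
  case False
  then have "det T = -1" using det_orthogonal_matrix[OF T] by auto
  then have "rotation_matrix (- T)" "rotation_matrix (- J)"
    using assms by (simp_all add: rotation_matrix_def orthogonal_matrix_uminus det_uminus_mat3)
  from distr_rotation_mult[OF this] show ?thesis
    by (simp add: matrix_mul_uminus_left matrix_mul_uminus_right)
qed

lemma integral_density_mult_mult:
  fixes g :: "mat3 \<Rightarrow> 'b::{banach, second_countable_topology}"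
  assumes T: "orthogonal_matrix T" and J: "orthogonal_matrix J" and det: "det T = det J"
    and sym: "symmetric_under f T J" and g: "g \<in> borel_measurable borel"
  shows "(\<integral>P. f P *\<^sub>R g P \<partial>\<nu>) = (\<integral>P. f P *\<^sub>R g (T ** P ** J) \<partial>\<nu>)"
proof -
  note fg_meas = borel_measurable_density g measurable_mult_mult[of T J]
  have "(\<integral>P. f P *\<^sub>R g P \<partial>\<nu>) = (\<integral>P. f P *\<^sub>R g P \<partial>distr \<nu> borel (\<lambda>P. T ** P ** J))"
    using distr_orthogonal_mult[OF T J det] by simp
  also have "\<dots> = (\<integral>P. f (T ** P ** J) *\<^sub>R g (T ** P ** J) \<partial>\<nu>)"
    by (rule integral_distr) (use fg_meas in measurable)
  also have "\<dots> = (\<integral>P. f P *\<^sub>R g (T ** P ** J) \<partial>\<nu>)"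
    using AE_in_SO3 sym unfolding symmetric_under_def
    by (intro integral_cong_AE) (use fg_meas in \<open>measurable, simp add: measurable_eq_borel, auto\<close>)
  finally show ?thesis .
qed

lemma first_moment_fixed:
  assumes "orthogonal_matrix T" "orthogonal_matrix J" "det T = det J" "symmetric_under f T J"
    and J_axis: "J *v axis k 1 = s *\<^sub>R axis k 1"
  shows "(\<integral>P. f P *\<^sub>R column k P \<partial>\<nu>) = s *\<^sub>R (T *v (\<integral>P. f P *\<^sub>R column k P \<partial>\<nu>))"
proof -
  have "(\<integral>P. f P *\<^sub>R column k P \<partial>\<nu>) = (\<integral>P. f P *\<^sub>R column k (T ** P ** J) \<partial>\<nu>)"
    by (rule integral_density_mult_mult[OF assms(1-4)])
      (rule borel_measurable_continuous_onI[OF continuous_on_column])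
  also have "\<dots> = (\<integral>P. s *\<^sub>R (T *v (f P *\<^sub>R column k P)) \<partial>\<nu>)"
    by (simp add: column_mult_eigenvector[OF J_axis] matrix_vector_mult_scaleR mult.commute)
  also have "\<dots> = s *\<^sub>R (T *v (\<integral>P. f P *\<^sub>R column k P \<partial>\<nu>))"
    by (rule integral_bounded_linear[OF _ integrable_first_moment])
      (rule bounded_linearI'; simp add: mat3_entries algebra_simps)
  finally show ?thesis .
qed

lemma second_moment_fixed:
  assumes "orthogonal_matrix T" "orthogonal_matrix J" "det T = det J" "symmetric_under f T J"
    and J_axis: "J *v axis k 1 = s *\<^sub>R axis k 1" and s: "s\<^sup>2 = 1"
  shows "(\<integral>P. f P *\<^sub>R outer (column k P) (column k P) \<partial>\<nu>)
    = T ** (\<integral>P. f P *\<^sub>R outer (column k P) (column k P) \<partial>\<nu>) ** transpose T"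
proof -
  have "(\<integral>P. f P *\<^sub>R outer (column k P) (column k P) \<partial>\<nu>)
      = (\<integral>P. f P *\<^sub>R outer (column k (T ** P ** J)) (column k (T ** P ** J)) \<partial>\<nu>)"
    by (rule integral_density_mult_mult[OF assms(1-4)])
      (rule borel_measurable_continuous_onI[OF continuous_on_outer_column])
  also have "\<dots> = (\<integral>P. T ** (f P *\<^sub>R outer (column k P) (column k P)) ** transpose T \<partial>\<nu>)"
    using s by (simp add: column_mult_eigenvector[OF J_axis] outer_scaleR outer_matrix_vector_mult
        power2_eq_square matrix_scalar_ac scalar_matrix_assoc)
  also have "\<dots> = T ** (\<integral>P. f P *\<^sub>R outer (column k P) (column k P) \<partial>\<nu>) ** transpose T"
    by (rule integral_bounded_linear[OF _ integrable_second_moment])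
      (rule bounded_linearI'; simp add: mat3_entries algebra_simps)
  finally show ?thesis .
qed

lemma symmetric_under_of_moments_fixed:
  assumes T: "orthogonal_matrix T" and J: "orthogonal_matrix J" and det: "det T = det J"
    and J_axis1: "J *v axis 1 1 = s *\<^sub>R axis 1 1" and s: "s\<^sup>2 = 1"
    and p: "c1 \<noteq> 0 \<Longrightarrow> mom_p \<nu> f = s *\<^sub>R (T *v mom_p \<nu> f)"
    and Q1: "c2 \<noteq> 0 \<or> c4 \<noteq> 0 \<Longrightarrow> mom_Q1 \<nu> f = T ** mom_Q1 \<nu> f ** transpose T"
    and Q2: "c3 \<noteq> 0 \<or> c4 \<noteq> 0 \<Longrightarrow> mom_Q2 \<nu> f = T ** mom_Q2 \<nu> f ** transpose T \<and>
      s'\<^sup>2 = 1 \<and> J *v axis 2 1 = s' *\<^sub>R axis 2 1"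
  shows "symmetric_under f T J"
  unfolding symmetric_under_def
proof
  fix P assume P: "P \<in> SO3"
  have "mean_field c1 c2 c3 c4 (mom_p \<nu> f) (mom_Q1 \<nu> f) (mom_Q2 \<nu> f) (T ** P ** J) =
      mean_field c1 c2 c3 c4 (mom_p \<nu> f) (mom_Q1 \<nu> f) (mom_Q2 \<nu> f) P"
    using T s p Q1 Q2
    by (intro mean_field_eqI[where s' = s'])
      (auto simp: m1_def m2_def column_mult_eigenvector[OF J_axis1] column_mult_eigenvector)
  then show "f (T ** P ** J) = f P"
    by (rule density_eq_of_mean_field_eq[OF P mult_mult_in_SO3[OF T J det P]])
qed

lemma rotated_moments_fixed_of_phase_symmetric:
  assumes sym: "H \<subseteq> conj_set R (phase_group H f)" and R: "R \<in> SO3"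
    and H: "\<forall>D\<in>H. orthogonal_matrix D" and D: "D \<in> H"
    and D_axes: "det D = 1 \<or> D *v axis 1 1 = axis 1 1 \<and> D *v axis 2 1 = axis 2 1"
  shows "R *v mom_p \<nu> f = D *v (R *v mom_p \<nu> f)"
    and "R ** mom_Q1 \<nu> f ** transpose R = D ** (R ** mom_Q1 \<nu> f ** transpose R) ** transpose D"
    and "R ** mom_Q2 \<nu> f ** transpose R = D ** (R ** mom_Q2 \<nu> f ** transpose R) ** transpose D"
proof -
  let ?T = "transpose R ** D ** R"
  have oR: "orthogonal_matrix R" and oD: "orthogonal_matrix D"
    using R H D by (simp_all add: SO3_def rotation_matrix_def)
  have oT: "orthogonal_matrix ?T" and det_T: "det ?T = det D"
    using orthogonal_matrix_conj[OF oR oD] det_conj_orthogonal[OF oR] .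
  obtain J where J: "orthogonal_matrix J" "det D = det J" "symmetric_under f ?T J"
    and J_axes: "J *v axis 1 1 = axis 1 1" "J *v axis 2 1 = axis 2 1"
  proof (cases "det D = 1")
    case True
    then show ?thesis
      using sym that[of "mat 1"] subset_conj_phase_group_iff[OF R H] D
      by (simp add: orthogonal_matrix_id)
  next
    case False
    then have "det D = -1" using det_orthogonal_matrix[OF oD] by auto
    then show ?thesis
      using sym that[of D] subset_conj_phase_group_iff[OF R H] D D_axes oD by auto
  qed
  note T_fixes = first_moment_fixed[OF oT J(1) _ J(3), where s=1]
    second_moment_fixed[OF oT J(1) _ J(3), where s=1]
  show "R *v mom_p \<nu> f = D *v (R *v mom_p \<nu> f)"
    using T_fixes(1)[of 1] J_axes det_T J(2) conj_fixes_vector_iff[OF oR, of _ 1]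
    by (simp add: mom_p_def m1_def)
  show "R ** mom_Q1 \<nu> f ** transpose R = D ** (R ** mom_Q1 \<nu> f ** transpose R) ** transpose D"
    "R ** mom_Q2 \<nu> f ** transpose R = D ** (R ** mom_Q2 \<nu> f ** transpose R) ** transpose D"
    using T_fixes(2)[of 1] T_fixes(2)[of 2] J_axes det_T J(2) conj_fixes_matrix_iff[OF oR]
    by (simp_all add: mom_Q1_def mom_Q2_def m1_def m2_def)
qed

lemma phase_symmetric_of_rotated_moments_fixed:
  assumes R: "R \<in> SO3" and H: "\<forall>D\<in>H. orthogonal_matrix D"
    and H_axis1: "\<forall>J\<in>H. \<exists>s. s\<^sup>2 = 1 \<and> J *v axis 1 1 = s *\<^sub>R axis 1 1"
    and p: "c1 \<noteq> 0 \<Longrightarrow> \<forall>D\<in>H. D *v axis 1 1 = axis 1 1 \<and> D *v (R *v mom_p \<nu> f) = R *v mom_p \<nu> f"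
    and Q1: "c2 \<noteq> 0 \<or> c4 \<noteq> 0 \<Longrightarrow>
      \<forall>D\<in>H. D ** (R ** mom_Q1 \<nu> f ** transpose R) ** transpose D = R ** mom_Q1 \<nu> f ** transpose R"
    and Q2: "c3 \<noteq> 0 \<or> c4 \<noteq> 0 \<Longrightarrow>
      \<forall>D\<in>H. D ** (R ** mom_Q2 \<nu> f ** transpose R) ** transpose D = R ** mom_Q2 \<nu> f ** transpose R \<and>
        (\<exists>s. s\<^sup>2 = 1 \<and> D *v axis 2 1 = s *\<^sub>R axis 2 1)"
  shows "H \<subseteq> conj_set R (phase_group H f)"
proof -
  have oR: "orthogonal_matrix R"
    using R by (simp add: SO3_def rotation_matrix_def)
  have sym: "symmetric_under f (transpose R ** D ** R) J"
    if D: "D \<in> H" and J: "orthogonal_matrix J" "det D = det J"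
      and J_axis1: "\<exists>s. s\<^sup>2 = 1 \<and> J *v axis 1 1 = s *\<^sub>R axis 1 1"
      and J_fixes_axis1: "c1 \<noteq> 0 \<Longrightarrow> J *v axis 1 1 = axis 1 1"
      and J_axis2: "c3 \<noteq> 0 \<or> c4 \<noteq> 0 \<Longrightarrow> \<exists>s. s\<^sup>2 = 1 \<and> J *v axis 2 1 = s *\<^sub>R axis 2 1"
    for D J
  proof -
    have oD: "orthogonal_matrix D" using H D by blast
    obtain s where s: "s\<^sup>2 = 1" "J *v axis 1 1 = s *\<^sub>R axis 1 1" "c1 \<noteq> 0 \<Longrightarrow> s = 1"
      using J_axis1 J_fixes_axis1 by (cases "c1 = 0") auto
    obtain s' where s': "c3 \<noteq> 0 \<or> c4 \<noteq> 0 \<Longrightarrow> s'\<^sup>2 = 1 \<and> J *v axis 2 1 = s' *\<^sub>R axis 2 1"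
      using J_axis2 by (cases "c3 \<noteq> 0 \<or> c4 \<noteq> 0") auto
    show ?thesis
    proof (rule symmetric_under_of_moments_fixed[OF orthogonal_matrix_conj[OF oR oD] J(1) _ s(2,1),
        where s'=s'])
      show "det (transpose R ** D ** R) = det J"
        using J(2) det_conj_orthogonal[OF oR] by simp
      show "mom_p \<nu> f = s *\<^sub>R ((transpose R ** D ** R) *v mom_p \<nu> f)" if "c1 \<noteq> 0"
        using p[OF that] D s(3)[OF that] conj_fixes_vector_iff[OF oR, of "mom_p \<nu> f" 1 D] by simp
      show "mom_Q1 \<nu> f = (transpose R ** D ** R) ** mom_Q1 \<nu> f ** transpose (transpose R ** D ** R)"
        if "c2 \<noteq> 0 \<or> c4 \<noteq> 0"
        using Q1[OF that] D conj_fixes_matrix_iff[OF oR] by simp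
      show "mom_Q2 \<nu> f = (transpose R ** D ** R) ** mom_Q2 \<nu> f ** transpose (transpose R ** D ** R) \<and>
          s'\<^sup>2 = 1 \<and> J *v axis 2 1 = s' *\<^sub>R axis 2 1"
        if "c3 \<noteq> 0 \<or> c4 \<noteq> 0"
        using Q2[OF that] D s'[OF that] conj_fixes_matrix_iff[OF oR] by simp
    qed
  qed
  show ?thesis
    unfolding subset_conj_phase_group_iff[OF R H]
  proof (intro ballI conjI impI allI)
    fix D assume "D \<in> H" "det D = 1"
    then show "symmetric_under f (transpose R ** D ** R) (mat 1)"
      by (intro sym) (auto simp: orthogonal_matrix_id intro: exI[of _ 1])
  next
    fix D J assume "D \<in> H" "det D = -1" "J \<in> H" "det J = -1"
    then show "symmetric_under f (transpose R ** D ** R) J"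
      using H H_axis1 p Q2 by (intro sym) auto
  qed
qed

section \<open>Phase symmetry of the four kernels\<close>

lemma D_inf_h_phase_symmetry_iff:
  assumes R: "R \<in> SO3" and c: "c1 = 0" "c3 = 0" "c4 = 0"
  shows "D_inf_h \<subseteq> conj_set R (phase_group D_inf_h f) \<longleftrightarrow>
    is_diag (R ** mom_Q1 \<nu> f ** transpose R) \<and>
    (R ** mom_Q1 \<nu> f ** transpose R) $ 2 $ 2 = (R ** mom_Q1 \<nu> f ** transpose R) $ 3 $ 3"
proof
  let ?B = "R ** mom_Q1 \<nu> f ** transpose R"
  assume sym: "D_inf_h \<subseteq> conj_set R (phase_group D_inf_h f)"
  have "?B = D ** ?B ** transpose D" if "s = 1 \<or> s = -1" "D = D_inf_elem s t" for D s t
    using rotated_moments_fixed_of_phase_symmetric(2)[OF sym R orthogonal_D_inf_h]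
      D_inf_elem_in_D_inf_h det_D_inf_elem that by blast
  then show "is_diag ?B \<and> ?B $ 2 $ 2 = ?B $ 3 $ 3"
    using is_diag_of_conj_fixed eq_22_33_of_fixed_by_quarter_turn
    unfolding R1_eq_D_inf_elem R3_eq_D_inf_elem by blast
next
  assume "is_diag (R ** mom_Q1 \<nu> f ** transpose R) \<and>
    (R ** mom_Q1 \<nu> f ** transpose R) $ 2 $ 2 = (R ** mom_Q1 \<nu> f ** transpose R) $ 3 $ 3"
  then show "D_inf_h \<subseteq> conj_set R (phase_group D_inf_h f)"
    using c D_inf_h_fixes_uniaxial
    by (intro phase_symmetric_of_rotated_moments_fixed[OF R orthogonal_D_inf_h D_inf_h_axis1]) auto
qed

lemma C_inf_v_phase_symmetry_iff:
  assumes R: "R \<in> SO3" and c: "c3 = 0" "c4 = 0"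
  shows "C_inf_v \<subseteq> conj_set R (phase_group C_inf_v f) \<longleftrightarrow>
    is_diag (R ** mom_Q1 \<nu> f ** transpose R) \<and>
    (R ** mom_Q1 \<nu> f ** transpose R) $ 2 $ 2 = (R ** mom_Q1 \<nu> f ** transpose R) $ 3 $ 3 \<and>
    (R *v mom_p \<nu> f) $ 2 = 0 \<and> (R *v mom_p \<nu> f) $ 3 = 0"
proof
  let ?B = "R ** mom_Q1 \<nu> f ** transpose R" and ?v = "R *v mom_p \<nu> f"
  have orth: "\<forall>D\<in>C_inf_v. orthogonal_matrix D"
    using orthogonal_D_inf_h C_inf_v_subset_D_inf_h by blast
  assume sym: "C_inf_v \<subseteq> conj_set R (phase_group C_inf_v f)"
  note fixed = rotated_moments_fixed_of_phase_symmetric[OF sym R orth]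
  have rot: "?v = D *v ?v \<and> ?B = D ** ?B ** transpose D" if "D = D_inf_elem 1 t" for D t
    using fixed(1,2) D_inf_elem_in_C_inf_v det_D_inf_elem that by blast
  have "?B = J3 ** ?B ** transpose J3"
    using fixed(2) J3_in_C_inf_v J3_axes by blast
  then show "is_diag ?B \<and> ?B $ 2 $ 2 = ?B $ 3 $ 3 \<and> ?v $ 2 = 0 \<and> ?v $ 3 = 0"
    using rot is_diag_of_conj_fixed eq_22_33_of_fixed_by_quarter_turn axis_of_fixed_by_R1
    unfolding conj_J3_eq_conj_R3 R1_eq_D_inf_elem by blast
next
  assume "is_diag (R ** mom_Q1 \<nu> f ** transpose R) \<and>
    (R ** mom_Q1 \<nu> f ** transpose R) $ 2 $ 2 = (R ** mom_Q1 \<nu> f ** transpose R) $ 3 $ 3 \<and>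
    (R *v mom_p \<nu> f) $ 2 = 0 \<and> (R *v mom_p \<nu> f) $ 3 = 0"
  then show "C_inf_v \<subseteq> conj_set R (phase_group C_inf_v f)"
    using c D_inf_h_fixes_uniaxial C_inf_v_subset_D_inf_h C_inf_v_axis1 C_inf_v_fixes_axis_vector
      orthogonal_D_inf_h
    by (intro phase_symmetric_of_rotated_moments_fixed[OF R]) (auto intro: exI[of _ 1])
qed

lemma D_2h_phase_symmetry_iff:
  assumes R: "R \<in> SO3" and c: "c1 = 0"
  shows "D_2h \<subseteq> conj_set R (phase_group D_2h f) \<longleftrightarrow>
    is_diag (R ** mom_Q1 \<nu> f ** transpose R) \<and> is_diag (R ** mom_Q2 \<nu> f ** transpose R)"
proof
  let ?B1 = "R ** mom_Q1 \<nu> f ** transpose R" and ?B2 = "R ** mom_Q2 \<nu> f ** transpose R"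
  assume sym: "D_2h \<subseteq> conj_set R (phase_group D_2h f)"
  have "?B1 = D ** ?B1 ** transpose D \<and> ?B2 = D ** ?B2 ** transpose D" if "D = R1 \<or> D = R3" for D
    using rotated_moments_fixed_of_phase_symmetric(2,3)[OF sym R orthogonal_D_2h] that det_R1_R3
    by (auto simp: D_2h_def)
  then show "is_diag ?B1 \<and> is_diag ?B2"
    using is_diag_of_conj_fixed by blast
next
  assume "is_diag (R ** mom_Q1 \<nu> f ** transpose R) \<and> is_diag (R ** mom_Q2 \<nu> f ** transpose R)"
  then show "D_2h \<subseteq> conj_set R (phase_group D_2h f)"
    using c D_2h_fixes_diagonal D_2h_axes(2)
    by (intro phase_symmetric_of_rotated_moments_fixed[OF R orthogonal_D_2h D_2h_axes(1)]) auto
qed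

lemma C_2v_phase_symmetry_iff:
  assumes R: "R \<in> SO3"
  shows "C_2v \<subseteq> conj_set R (phase_group C_2v f) \<longleftrightarrow>
    is_diag (R ** mom_Q1 \<nu> f ** transpose R) \<and> is_diag (R ** mom_Q2 \<nu> f ** transpose R) \<and>
    (R *v mom_p \<nu> f) $ 2 = 0 \<and> (R *v mom_p \<nu> f) $ 3 = 0"
proof
  let ?B1 = "R ** mom_Q1 \<nu> f ** transpose R" and ?B2 = "R ** mom_Q2 \<nu> f ** transpose R"
    and ?v = "R *v mom_p \<nu> f"
  have orth: "\<forall>D\<in>C_2v. orthogonal_matrix D"
    using orthogonal_D_2h C_2v_subset_D_2h by blast
  assume sym: "C_2v \<subseteq> conj_set R (phase_group C_2v f)"
  note fixed = rotated_moments_fixed_of_phase_symmetric[OF sym R orth]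
  have "?v = R1 *v ?v" "?B1 = R1 ** ?B1 ** transpose R1" "?B2 = R1 ** ?B2 ** transpose R1"
    using fixed det_R1_R3 by (auto simp: C_2v_def)
  moreover have "?B1 = J3 ** ?B1 ** transpose J3" "?B2 = J3 ** ?B2 ** transpose J3"
    using fixed(2,3) J3_axes by (auto simp: C_2v_def)
  ultimately show "is_diag ?B1 \<and> is_diag ?B2 \<and> ?v $ 2 = 0 \<and> ?v $ 3 = 0"
    using is_diag_of_conj_fixed axis_of_fixed_by_R1 unfolding conj_J3_eq_conj_R3 by blast
next
  assume "is_diag (R ** mom_Q1 \<nu> f ** transpose R) \<and> is_diag (R ** mom_Q2 \<nu> f ** transpose R) \<and>
    (R *v mom_p \<nu> f) $ 2 = 0 \<and> (R *v mom_p \<nu> f) $ 3 = 0"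
  then show "C_2v \<subseteq> conj_set R (phase_group C_2v f)"
    using D_2h_fixes_diagonal D_2h_axes C_2v_subset_D_2h C_2v_axis1 C_2v_fixes_axis_vector orthogonal_D_2h
    by (intro phase_symmetric_of_rotated_moments_fixed[OF R]) (auto 4 3 intro: exI[of _ 1])
qed

end

theorem lemma1:
  fixes \<nu> :: "mat3 measure" and f :: "mat3 \<Rightarrow> real" and R :: mat3
    and c c1 c2 c3 c4 :: real
  assumes haar: "haar_SO3 \<nu>"
    and cpos: "c > 0"
    and R: "R \<in> SO3"
    and crit: "crit_point \<nu> (kern c1 c2 c3 c4) f"
  defines "p \<equiv> mom_p \<nu> f" and "Q1 \<equiv> mom_Q1 \<nu> f" and "Q2 \<equiv> mom_Q2 \<nu> f"
  shows
    "(c1 = 0 \<and> c3 = 0 \<and> c4 = 0 \<longrightarrow>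
       (D_inf_h \<subseteq> conj_set R (phase_group D_inf_h f) \<longleftrightarrow>
        is_diag (R ** Q1 ** transpose R) \<and>
        (R ** Q1 ** transpose R) $ 2 $ 2 = (R ** Q1 ** transpose R) $ 3 $ 3))
   \<and> (c3 = 0 \<and> c4 = 0 \<longrightarrow>
       (C_inf_v \<subseteq> conj_set R (phase_group C_inf_v f) \<longleftrightarrow>
        is_diag (R ** Q1 ** transpose R) \<and>
        (R ** Q1 ** transpose R) $ 2 $ 2 = (R ** Q1 ** transpose R) $ 3 $ 3 \<and>
        (R *v p) $ 2 = 0 \<and> (R *v p) $ 3 = 0))
   \<and> (c1 = 0 \<longrightarrow>
       (D_2h \<subseteq> conj_set R (phase_group D_2h f) \<longleftrightarrow>
        is_diag (R ** Q1 ** transpose R) \<and> is_diag (R ** Q2 ** transpose R)))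
   \<and> (C_2v \<subseteq> conj_set R (phase_group C_2v f) \<longleftrightarrow>
        is_diag (R ** Q1 ** transpose R) \<and> is_diag (R ** Q2 ** transpose R) \<and>
        (R *v p) $ 2 = 0 \<and> (R *v p) $ 3 = 0)"
proof -
  interpret critical_density \<nu> f c1 c2 c3 c4
    using haar crit by unfold_locales
  \<comment> \<open>The factor \<open>c\<close> is absorbed into the coefficients of \<open>kern\<close>, so \<open>c > 0\<close> is not needed.\<close>
  show ?thesis
    unfolding p_def Q1_def Q2_def
    using D_inf_h_phase_symmetry_iff[OF R] C_inf_v_phase_symmetry_iff[OF R]
      D_2h_phase_symmetry_iff[OF R] C_2v_phase_symmetry_iff[OF R]
    by blast
qed

end
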